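(* Let $\mathbf{x}\in\Sigma_q^*$ with $|\mathbf{x}|\ge 5$ and let $\mathbf{x}'\in D^*(\mathbf{x})$. Suppose $\mathbf{x}=\mathbf{r}\,ab\,\mathbf{t}\,de\,\mathbf{s}$ with $a,b,d,e\in\Sigma_q$, $\mathbf{r},\mathbf{t},\mathbf{s}\in\Sigma_q^*$ and $\mathbf{t}$ nonempty. Then there exist $\mathbf{u},\mathbf{w},\mathbf{v}\in\Sigma_q^*$ such that $\mathbf{x}'=\mathbf{u}\,ab\,\mathbf{w}\,de\,\mathbf{v}$, $\mathbf{u}ab\in D^*(\mathbf{r}ab)$, $ab\mathbf{w}de\in D^*(ab\mathbf{t}de)$, and $de\mathbf{v}\in D^*(de\mathbf{s})$.
   Context: $\Sigma_q=\{0,1,\dots,q-1\}$ with $q\ge 3$; $\Sigma_q^*$ is the set of all finite strings over $\Sigma_q$ (including the empty string). A tandem duplication of length $k$ transforms a string $\mathbf{u}\mathbf{v}\mathbf{w}$ with $|\mathbf{v}|=k$ into $\mathbf{u}\mathbf{v}\mathbf{v}\mathbf{w}$; a $\le 3$-TD is a tandem duplication of length $1$, $2$ or $3$. $D^*(\mathbf{x})$ denotes the set of strings obtainable from $\mathbf{x}$ by finitely many (possibly zero) $\le3$-TDs. *)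

theory Defs
  imports Main
begin

definition in_Sigma_star :: "nat \<Rightarrow> nat list \<Rightarrow> bool" where
  "in_Sigma_star q x \<longleftrightarrow> (\<forall>c\<in>set x. c < q)"

definition td_step :: "nat list \<Rightarrow> nat list \<Rightarrow> bool" where
  "td_step x y \<longleftrightarrow> (\<exists>u v w. x = u @ v @ w \<and> y = u @ v @ v @ w \<and> 1 \<le> length v \<and> length v \<le> 3)"

definition Dstar :: "nat list \<Rightarrow> nat list set" where
  "Dstar x = {y. td_step\<^sup>*\<^sup>* x y}"

end

theory Submission
  imports Defs
begin

text \<open>A duplicated block has length at most 3, so it cannot reach from strictly before a
two-letter marker to strictly after it. Hence every \<open>\<le>3\<close>-TD of \<open>L m R\<close> with \<open>|m| = 2\<close> is a
duplication inside \<open>L m\<close> or inside \<open>m R\<close> that keeps \<open>m\<close> as a suffix resp. prefix. Iterating,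
every string in \<open>D\<^sup>*(L m R)\<close> factors as \<open>L' m R'\<close> with \<open>L' m \<in> D\<^sup>*(L m)\<close> and \<open>m R' \<in> D\<^sup>*(m R)\<close>;
cutting first at \<open>ab\<close> and then at \<open>de\<close> gives the theorem.\<close>

lemma td_step_iff_take_drop:
  "td_step X Y \<longleftrightarrow>
     (\<exists>i k. 1 \<le> k \<and> k \<le> 3 \<and> i + k \<le> length X \<and> Y = take (i + k) X @ drop i X)"
proof
  assume "td_step X Y"
  then obtain u v w where "X = u @ v @ w" "Y = u @ v @ v @ w" "1 \<le> length v" "length v \<le> 3"
    unfolding td_step_def by blast
  then show "\<exists>i k. 1 \<le> k \<and> k \<le> 3 \<and> i + k \<le> length X \<and> Y = take (i + k) X @ drop i X"
    by (intro exI[of _ "length u"] exI[of _ "length v"]) simp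
next
  assume "\<exists>i k. 1 \<le> k \<and> k \<le> 3 \<and> i + k \<le> length X \<and> Y = take (i + k) X @ drop i X"
  then obtain i k where k: "1 \<le> k" "k \<le> 3" "i + k \<le> length X"
    and Y: "Y = take (i + k) X @ drop i X" by blast
  define v where "v = take k (drop i X)"
  have "X = take i X @ v @ drop (i + k) X" "Y = take i X @ v @ v @ drop (i + k) X"
    using Y by (metis v_def append.assoc append_take_drop_id drop_drop add.commute take_add)+
  moreover have "length v = k" using k by (simp add: v_def)
  ultimately show "td_step X Y" unfolding td_step_def using k by metis
qed

lemma td_step_split_at_marker:
  assumes m: "length m = 2" and step: "td_step (L @ m @ R) Y"
  shows "(\<exists>L'. td_step (L @ m) (L' @ m) \<and> Y = L' @ m @ R) \<or>
         (\<exists>R'. td_step (m @ R) (m @ R') \<and> Y = L @ m @ R')"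
proof -
  define X where "X = L @ m @ R"
  obtain i k where k: "1 \<le> k" "k \<le> 3" "i + k \<le> length X"
    and Y: "Y = take (i + k) X @ drop i X"
    using step td_step_iff_take_drop X_def by metis
  show ?thesis
  proof (cases "i \<le> length L \<and> i + k \<le> length L + 2")
    case True
    define L' where "L' = take (i + k) X @ drop i L"
    have "take (i + k) X = take (i + k) (L @ m)"
      using True m unfolding X_def by (subst append.assoc[symmetric], subst take_append) simp
    then have "td_step (L @ m) (L' @ m)"
      unfolding td_step_iff_take_drop L'_def
      by (intro exI[of _ i] exI[of _ k]) (use True k m in simp)
    moreover have "Y = L' @ m @ R" using Y True unfolding L'_def X_def by simp
    ultimately show ?thesis by blast
  next
    case False
    define j where "j = i - length L"
    define Z where "Z = m @ R"
    have i: "i = length L + j" and "2 \<le> j + k" using False k unfolding j_def by auto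
    have "j + k \<le> length Z" using k i unfolding X_def Z_def by simp
    define R' where "R' = drop 2 (take (j + k) Z) @ drop j Z"
    have "take 2 (take (j + k) Z) = m"
      using \<open>2 \<le> j + k\<close> m unfolding Z_def by (simp add: min_def)
    then have mR': "m @ R' = take (j + k) Z @ drop j Z"
      unfolding R'_def by (metis append.assoc append_take_drop_id)
    have "td_step (m @ R) (m @ R')"
      unfolding td_step_iff_take_drop mR' Z_def[symmetric]
      by (intro exI[of _ j] exI[of _ k]) (use k \<open>j + k \<le> length Z\<close> in simp)
    moreover have "Y = L @ m @ R'"
      using Y mR' unfolding X_def Z_def[symmetric] i by (simp add: add.assoc)
    ultimately show ?thesis by blast
  qed
qed

lemma Dstar_split_at_marker:
  assumes m: "length m = 2" and Y: "Y \<in> Dstar (L @ m @ R)"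
  shows "\<exists>L' R'. Y = L' @ m @ R' \<and> L' @ m \<in> Dstar (L @ m) \<and> m @ R' \<in> Dstar (m @ R)"
proof -
  have "td_step\<^sup>*\<^sup>* (L @ m @ R) Y" using Y by (simp add: Dstar_def)
  then have "\<exists>L' R'. Y = L' @ m @ R' \<and> td_step\<^sup>*\<^sup>* (L @ m) (L' @ m) \<and> td_step\<^sup>*\<^sup>* (m @ R) (m @ R')"
  proof (induction rule: rtranclp_induct)
    case base
    show ?case by blast
  next
    case (step Y Z)
    then obtain L' R' where Y: "Y = L' @ m @ R'"
      and L': "td_step\<^sup>*\<^sup>* (L @ m) (L' @ m)" and R': "td_step\<^sup>*\<^sup>* (m @ R) (m @ R')" by blast
    from td_step_split_at_marker[OF m step(2)[unfolded Y]] show ?case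
      using rtranclp.rtrancl_into_rtrancl[OF L'] rtranclp.rtrancl_into_rtrancl[OF R'] L' R'
      by blast
  qed
  then show ?thesis by (simp add: Dstar_def)
qed

lemma td_step_set_eq: "td_step X Y \<Longrightarrow> set Y = set X"
  unfolding td_step_def by auto

lemma td_step_length_le: "td_step X Y \<Longrightarrow> length X \<le> length Y"
  unfolding td_step_def by auto

lemma Dstar_set_eq:
  assumes "Y \<in> Dstar X" shows "set Y = set X"
proof -
  have "td_step\<^sup>*\<^sup>* X Y" using assms by (simp add: Dstar_def)
  then show ?thesis by induction (simp_all add: td_step_set_eq)
qed

lemma Dstar_length_le:
  assumes "Y \<in> Dstar X" shows "length X \<le> length Y"
proof -
  have "td_step\<^sup>*\<^sup>* X Y" using assms by (simp add: Dstar_def)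
  then show ?thesis by induction (auto dest: td_step_length_le)
qed

theorem lemma2:
  fixes q :: nat and x x' r t s :: "nat list" and a b d e :: nat
  assumes "q \<ge> 3"
    and "in_Sigma_star q x"
    and "length x \<ge> 5"
    and "x' \<in> Dstar x"
    and "x = r @ [a, b] @ t @ [d, e] @ s"
    and "a < q" "b < q" "d < q" "e < q"
    and "in_Sigma_star q r" "in_Sigma_star q t" "in_Sigma_star q s"
    and "t \<noteq> []"
  shows "\<exists>u w v. in_Sigma_star q u \<and> in_Sigma_star q w \<and> in_Sigma_star q v \<and>
           x' = u @ [a, b] @ w @ [d, e] @ v \<and>
           u @ [a, b] \<in> Dstar (r @ [a, b]) \<and>
           [a, b] @ w @ [d, e] \<in> Dstar ([a, b] @ t @ [d, e]) \<and>
           [d, e] @ v \<in> Dstar ([d, e] @ s)"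
proof -
  have "x' \<in> Dstar (r @ [a, b] @ (t @ [d, e] @ s))" using assms(4,5) by simp
  from Dstar_split_at_marker[OF _ this] obtain u R where x': "x' = u @ [a, b] @ R"
    and u: "u @ [a, b] \<in> Dstar (r @ [a, b])" and "[a, b] @ R \<in> Dstar ([a, b] @ t @ [d, e] @ s)"
    by auto
  then have "[a, b] @ R \<in> Dstar (([a, b] @ t) @ [d, e] @ s)" by simp
  from Dstar_split_at_marker[OF _ this] obtain M v where abR: "[a, b] @ R = M @ [d, e] @ v"
    and M: "M @ [d, e] \<in> Dstar ([a, b] @ t @ [d, e])" and v: "[d, e] @ v \<in> Dstar ([d, e] @ s)"
    by auto
  have "2 \<le> length M" using Dstar_length_le[OF M] by simp
  then have "take 2 M = [a, b]" using arg_cong[OF abR, of "take 2"] by simp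
  then obtain w where Mw: "M = [a, b] @ w" by (metis append_take_drop_id)
  then have x'_eq: "x' = u @ [a, b] @ w @ [d, e] @ v" using abR x' by simp
  have "\<forall>c\<in>set x'. c < q"
    using Dstar_set_eq[OF assms(4)] assms(2) by (simp add: in_Sigma_star_def)
  then have "in_Sigma_star q u \<and> in_Sigma_star q w \<and> in_Sigma_star q v"
    unfolding x'_eq in_Sigma_star_def by simp
  with x'_eq u v M show ?thesis unfolding Mw by (metis append.assoc)
qed

end
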